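(* If $G$ is a connected $P_5$-free graph, then $d_G(s,t)=\lambda_G(s,t)$ for every $s,t\in V(G)$.
   Context: Rendezvous game with adversaries. Let $G$ be a finite, simple, undirected, connected graph, let $s,t\in V(G)$ and let $k\ge 1$ be an integer. Two players play: Facilitator, who controls two agents $R$ and $J$ initially placed on $s$ and $t$ respectively, and Divider, who controls $k$ agents $D_1,\dots,D_k$ which Divider initially places on vertices of $V(G)\setminus\{s,t\}$ of his choice (several agents may share a vertex). After the initial placement the players alternate moves, Facilitator moving first. In a move, the player moves each of his agents to an adjacent vertex or leaves it where it is; no agent may be moved to a vertex currently occupied by an agent of the opponent. Both players have full information. Facilitator wins if at some moment $R$ and $J$ occupy the same vertex; Divider wins if this never happens. $d_G(s,t)$ is the minimum $k$ such that Divider with $k$ agents has a winning strategy on $G$ against Facilitator starting from $s$ and $t$; $d_G(s,t)=+\infty$ if $s=t$ or $s,t$ are adjacent. $\lambda_G(s,t)$ is the minimum size of a set $S\subseteq V(G)\setminus\{s,t\}$ such that $s$ and $t$ lie in different connected components of $G-S$; $\lambda_G(s,t)=+\infty$ if $s=t$ or $s,t$ are adjacent. A graph is $P_5$-free if it has no induced subgraph isomorphic to the path on 5 vertices. *)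

theory Defs
  imports Main "HOL-Library.Extended_Nat"
begin

definition simple_graph :: "'a set \<Rightarrow> ('a \<Rightarrow> 'a \<Rightarrow> bool) \<Rightarrow> bool" where
  "simple_graph V E \<longleftrightarrow> finite V \<and> (\<forall>x y. E x y \<longrightarrow> E y x)
     \<and> (\<forall>x. \<not> E x x) \<and> (\<forall>x y. E x y \<longrightarrow> x \<in> V \<and> y \<in> V)"

definition connected_in :: "('a \<Rightarrow> 'a \<Rightarrow> bool) \<Rightarrow> 'a set \<Rightarrow> 'a \<Rightarrow> 'a \<Rightarrow> bool" where
  "connected_in E W x y \<longleftrightarrow> x \<in> W \<and> y \<in> W \<and> (\<lambda>u v. E u v \<and> u \<in> W \<and> v \<in> W)\<^sup>*\<^sup>* x y"

definition connected_graph :: "'a set \<Rightarrow> ('a \<Rightarrow> 'a \<Rightarrow> bool) \<Rightarrow> bool" where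
  "connected_graph V E \<longleftrightarrow> V \<noteq> {} \<and> (\<forall>x\<in>V. \<forall>y\<in>V. connected_in E V x y)"

definition P5_free :: "'a set \<Rightarrow> ('a \<Rightarrow> 'a \<Rightarrow> bool) \<Rightarrow> bool" where
  "P5_free V E \<longleftrightarrow> \<not> (\<exists>f :: nat \<Rightarrow> 'a. inj_on f {0..<5} \<and> f ` {0..<5} \<subseteq> V \<and>
      (\<forall>i<5. \<forall>j<5. E (f i) (f j) \<longleftrightarrow> (i + 1 = j \<or> j + 1 = i)))"

definition lambda_G :: "'a set \<Rightarrow> ('a \<Rightarrow> 'a \<Rightarrow> bool) \<Rightarrow> 'a \<Rightarrow> 'a \<Rightarrow> enat" where
  "lambda_G V E s t = (if s = t \<or> E s t then \<infinity> else
     Inf ((\<lambda>S. enat (card S)) ` {S. S \<subseteq> V - {s, t} \<and> \<not> connected_in E (V - S) s t}))"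

text \<open>The rendezvous game. A position is (R, J, list of Divider agent positions).\<close>
type_synonym 'a pos = "'a \<times> 'a \<times> 'a list"

definition gstep :: "'a set \<Rightarrow> ('a \<Rightarrow> 'a \<Rightarrow> bool) \<Rightarrow> 'a \<Rightarrow> 'a \<Rightarrow> bool" where
  "gstep V E x y \<longleftrightarrow> y \<in> V \<and> (y = x \<or> E x y)"

definition fac_move :: "'a set \<Rightarrow> ('a \<Rightarrow> 'a \<Rightarrow> bool) \<Rightarrow> 'a pos \<Rightarrow> 'a pos \<Rightarrow> bool" where
  "fac_move V E p q \<longleftrightarrow> (case p of (r, j, D) \<Rightarrow> case q of (r', j', D') \<Rightarrow>
     D' = D \<and> gstep V E r r' \<and> gstep V E j j' \<and> r' \<notin> set D \<and> j' \<notin> set D)"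

definition div_move :: "'a set \<Rightarrow> ('a \<Rightarrow> 'a \<Rightarrow> bool) \<Rightarrow> 'a pos \<Rightarrow> 'a pos \<Rightarrow> bool" where
  "div_move V E p q \<longleftrightarrow> (case p of (r, j, D) \<Rightarrow> case q of (r', j', D') \<Rightarrow>
     r' = r \<and> j' = j \<and> length D' = length D \<and>
     (\<forall>i<length D. gstep V E (D ! i) (D' ! i) \<and> D' ! i \<noteq> r \<and> D' ! i \<noteq> j))"

text \<open>Divider with k agents has a winning strategy: an initial placement D0 on
  V - {s,t} and a (history-dependent) strategy sigma such that along every finite
  prefix of a play in which Facilitator moves legally (at steps 2m -> 2m+1) and Divider
  follows sigma (at steps 2m+1 -> 2m+2), Divider's moves are legal and R, J never
  occupy the same vertex.\<close>
definition divider_wins :: "'a set \<Rightarrow> ('a \<Rightarrow> 'a \<Rightarrow> bool) \<Rightarrow> 'a \<Rightarrow> 'a \<Rightarrow> nat \<Rightarrow> bool" where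
  "divider_wins V E s t k \<longleftrightarrow>
     (\<exists>D0 (\<sigma> :: 'a pos list \<Rightarrow> 'a list). length D0 = k \<and> set D0 \<subseteq> V - {s, t} \<and>
       (\<forall>(p :: nat \<Rightarrow> 'a pos) N. p 0 = (s, t, D0) \<longrightarrow>
          (\<forall>m. 2 * m + 1 \<le> N \<longrightarrow> fac_move V E (p (2 * m)) (p (2 * m + 1))) \<longrightarrow>
          (\<forall>m. 2 * m + 2 \<le> N \<longrightarrow>
               p (2 * m + 2) = (fst (p (2 * m + 1)), fst (snd (p (2 * m + 1))),
                                \<sigma> (map p [0..<2 * m + 2]))) \<longrightarrow>
          (\<forall>m. 2 * m + 2 \<le> N \<longrightarrow> div_move V E (p (2 * m + 1)) (p (2 * m + 2))) \<and>
          (\<forall>i\<le>N. fst (p i) \<noteq> fst (snd (p i)))))"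

text \<open>d_G(s,t): least k \<ge> 1 such that Divider with k agents wins; infinity if
  s = t or s, t adjacent (and Inf of the empty set is infinity).\<close>
definition d_G :: "'a set \<Rightarrow> ('a \<Rightarrow> 'a \<Rightarrow> bool) \<Rightarrow> 'a \<Rightarrow> 'a \<Rightarrow> enat" where
  "d_G V E s t = (if s = t \<or> E s t then \<infinity> else
     Inf (enat ` {k. k \<ge> 1 \<and> divider_wins V E s t k}))"

end

theory Submission
  imports Defs
begin

text \<open>A set of vertices separating \<open>s\<close> from \<open>t\<close> wins for Divider if his agents simply stay
  on it, so \<open>d \<le> \<lambda>\<close>. Conversely, if Divider's initial placement \<open>D\<close> does not separate
  \<open>s\<close> from \<open>t\<close>, a shortest \<open>s\<close>-\<open>t\<close> path in \<open>G - D\<close> is induced, hence has at most three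
  edges in a \<open>P\<^sub>5\<close>-free graph. With a common free neighbour \<open>c\<close>, \<open>R\<close> and \<open>J\<close> meet on \<open>c\<close>
  at once; along a free path \<open>s a b t\<close> they move to \<open>a\<close> and \<open>b\<close>, Divider cannot occupy
  \<open>b\<close> in reply, and \<open>R\<close> joins \<open>J\<close> on \<open>b\<close>. So any winning placement is a separator,
  and \<open>\<lambda> \<le> d\<close>.\<close>

lemma connected_in_sym:
  assumes "\<And>u v. E u v \<Longrightarrow> E v u" and "connected_in E W x y"
  shows "connected_in E W y x"
proof -
  have "symp (\<lambda>u v. E u v \<and> u \<in> W \<and> v \<in> W)" using assms(1) by (auto intro: sympI)
  then show ?thesis using assms(2) unfolding connected_in_def by (auto intro: symp_rtranclp[THEN sympD])
qed

lemma connected_in_trans: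
  "connected_in E W x y \<Longrightarrow> connected_in E W y z \<Longrightarrow> connected_in E W x z"
  unfolding connected_in_def by (meson rtranclp_trans)

lemma connected_in_gstep:
  "connected_in E W x r \<Longrightarrow> gstep V E r r' \<Longrightarrow> r' \<in> W \<Longrightarrow> connected_in E W x r'"
  unfolding connected_in_def gstep_def by (auto intro: rtranclp.rtrancl_into_rtrancl)

lemma shortest_walk_induced:
  assumes walk: "(R ^^ n) s t" and shortest: "\<And>m. (R ^^ m) s t \<Longrightarrow> n \<le> m"
  obtains f where "f 0 = s" "f n = t" "\<And>i. i < n \<Longrightarrow> R (f i) (f (Suc i))"
    and "\<And>i j. i < j \<Longrightarrow> j \<le> n \<Longrightarrow> f i \<noteq> f j"
    and "\<And>i j. i + 2 \<le> j \<Longrightarrow> j \<le> n \<Longrightarrow> \<not> R (f i) (f j)"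
proof -
  obtain f where f0: "f 0 = s" and fn: "f n = t" and fR: "\<And>i. i < n \<Longrightarrow> R (f i) (f (Suc i))"
    using walk relpowp_fun_conv by metis
  have prefix: "(R ^^ i) s (f i)" if "i \<le> n" for i
    using that
  proof (induction i)
    case (Suc i)
    then show ?case using fR[of i] by (auto intro: relpowp_Suc_I)
  qed (simp add: f0)
  have suffix: "(R ^^ (n - i)) (f i) t" if "i \<le> n" for i
  proof -
    have "(R ^^ k) (f (n - k)) t" if "k \<le> n" for k
      using that
    proof (induction k)
      case (Suc k)
      then have "R (f (n - Suc k)) (f (n - k))"
        using fR[of "n - Suc k"] by (simp add: Suc_diff_Suc)
      then show ?case using Suc by (metis Suc_leD relpowp_Suc_I2)
    qed (simp add: fn)
    then show ?thesis using that by (metis diff_diff_cancel diff_le_self)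
  qed
  have shortcut: "n \<le> a + (n - b)" if "(R ^^ a) s (f b)" "b \<le> n" for a b
    using shortest suffix[OF \<open>b \<le> n\<close>] that(1) by (metis relpowp_add relcomppI)
  show thesis
  proof
    show "f i \<noteq> f j" if "i < j" "j \<le> n" for i j
      using shortcut[of i j] prefix[of i] that by auto
    show "\<not> R (f i) (f j)" if "i + 2 \<le> j" "j \<le> n" for i j
    proof
      assume "R (f i) (f j)"
      then have "(R ^^ Suc i) s (f j)" using prefix[of i] that by (auto intro: relpowp_Suc_I)
      then show False using shortcut[of "Suc i" j] that by simp
    qed
  qed (use f0 fn fR in auto)
qed

lemma P5_free_induced_path_short:
  assumes P: "P5_free V E" and sym: "\<And>u v. E u v \<Longrightarrow> E v u" and irrefl: "\<And>u. \<not> E u u"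
    and inV: "\<And>i. i \<le> n \<Longrightarrow> f i \<in> V"
    and adj: "\<And>i. i < n \<Longrightarrow> E (f i) (f (Suc i))"
    and distinct: "\<And>i j. i < j \<Longrightarrow> j \<le> n \<Longrightarrow> f i \<noteq> f j"
    and chordless: "\<And>i j. i + 2 \<le> j \<Longrightarrow> j \<le> n \<Longrightarrow> \<not> E (f i) (f j)"
  shows "n < 4"
proof (rule ccontr)
  assume "\<not> n < 4"
  then have long: "4 \<le> n" by simp
  then have le: "i < 5 \<Longrightarrow> i \<le> n" for i by simp
  have "inj_on f {0..<5}"
  proof (rule inj_onI)
    fix i j assume "i \<in> {0..<5::nat}" "j \<in> {0..<5::nat}" "f i = f j"
    then show "i = j" using distinct[of i j] distinct[of j i] long by (cases i j rule: linorder_cases) auto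
  qed
  moreover have "f ` {0..<5} \<subseteq> V"
  proof (rule image_subsetI)
    fix i assume "i \<in> {0..<5::nat}"
    then show "f i \<in> V" using inV long by simp
  qed
  moreover have "\<forall>i<5. \<forall>j<5. E (f i) (f j) \<longleftrightarrow> i + 1 = j \<or> j + 1 = i"
  proof (intro allI impI iffI)
    fix i j :: nat assume that: "i < 5" "j < 5"
    assume e: "E (f i) (f j)"
    show "i + 1 = j \<or> j + 1 = i"
    proof (rule ccontr)
      assume "\<not> (i + 1 = j \<or> j + 1 = i)"
      then consider "i = j" | "i + 2 \<le> j" | "j + 2 \<le> i" by arith
      then show False
      proof cases
        case 1 then show False using e irrefl by simp
      next
        case 2 then show False using e chordless[of i j] le[OF that(2)] by simp
      next
        case 3 then show False using e sym chordless[of j i] le[OF that(1)] by blast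
      qed
    qed
  next
    fix i j :: nat assume that: "i < 5" "j < 5"
    assume "i + 1 = j \<or> j + 1 = i"
    then show "E (f i) (f j)"
    proof
      assume "i + 1 = j" then show ?thesis using adj[of i] long that by simp
    next
      assume "j + 1 = i" then show ?thesis using adj[of j] sym long that by simp
    qed
  qed
  ultimately show False using P unfolding P5_free_def by blast
qed

lemma P5_free_connected_in_short_path:
  assumes P: "P5_free V E" and sym: "\<And>u v. E u v \<Longrightarrow> E v u" and irrefl: "\<And>u. \<not> E u u"
    and W: "W \<subseteq> V" and conn: "connected_in E W s t" and "s \<noteq> t" "\<not> E s t"
  shows "(\<exists>c\<in>W. E s c \<and> E c t) \<or> (\<exists>a\<in>W. \<exists>b\<in>W. E s a \<and> E a b \<and> E b t)"
proof -
  define R where "R = (\<lambda>u v. E u v \<and> u \<in> W \<and> v \<in> W)"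
  have walk: "\<exists>n. (R ^^ n) s t" using conn unfolding connected_in_def R_def by (simp add: rtranclp_power)
  define n where "n = (LEAST n. (R ^^ n) s t)"
  have n: "(R ^^ n) s t" unfolding n_def using walk by (rule LeastI_ex)
  have shortest: "n \<le> m" if "(R ^^ m) s t" for m unfolding n_def using that by (rule Least_le)
  obtain f where f0: "f 0 = s" and fn: "f n = t" and fR: "\<And>i. i < n \<Longrightarrow> R (f i) (f (Suc i))"
    and distinct: "\<And>i j. i < j \<Longrightarrow> j \<le> n \<Longrightarrow> f i \<noteq> f j"
    and chordless: "\<And>i j. i + 2 \<le> j \<Longrightarrow> j \<le> n \<Longrightarrow> \<not> R (f i) (f j)"
    using shortest_walk_induced[OF n shortest] by blast
  have fW: "f i \<in> W" if "i \<le> n" for i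
  proof (cases "i = n")
    case True then show ?thesis using fn conn unfolding connected_in_def by simp
  next
    case False then show ?thesis using fR[of i] that unfolding R_def by simp
  qed
  have "n < 4"
  proof (rule P5_free_induced_path_short[OF P sym irrefl])
    show "f i \<in> V" if "i \<le> n" for i using fW[OF that] W by blast
    show "E (f i) (f (Suc i))" if "i < n" for i using fR[OF that] unfolding R_def by simp
    show "f i \<noteq> f j" if "i < j" "j \<le> n" for i j using distinct[OF that] .
    show "\<not> E (f i) (f j)" if "i + 2 \<le> j" "j \<le> n" for i j
      using chordless[OF that] fW[of i] fW[OF that(2)] that unfolding R_def by simp
  qed
  moreover have "n \<noteq> 0" using n \<open>s \<noteq> t\<close> by (metis relpowp.simps(1))
  moreover have "n \<noteq> 1" using n \<open>\<not> E s t\<close> unfolding R_def by (metis relpowp_1)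
  ultimately consider "n = 2" | "n = 3" by arith
  then show ?thesis
  proof cases
    case 1
    then show ?thesis using f0 fn fR[of 0] fR[of 1] unfolding R_def by (auto simp: numeral_2_eq_2)
  next
    case 2
    then show ?thesis using f0 fn fR[of 0] fR[of 1] fR[of 2] unfolding R_def
      by (auto simp: numeral_2_eq_2 numeral_3_eq_3)
  qed
qed

definition strategy_wins ::
    "'a set \<Rightarrow> ('a \<Rightarrow> 'a \<Rightarrow> bool) \<Rightarrow> 'a \<Rightarrow> 'a \<Rightarrow> 'a list \<Rightarrow> ('a pos list \<Rightarrow> 'a list) \<Rightarrow> bool" where
  "strategy_wins V E s t D0 \<sigma> \<longleftrightarrow>
     (\<forall>(p :: nat \<Rightarrow> 'a pos) N. p 0 = (s, t, D0) \<longrightarrow>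
        (\<forall>m. 2 * m + 1 \<le> N \<longrightarrow> fac_move V E (p (2 * m)) (p (2 * m + 1))) \<longrightarrow>
        (\<forall>m. 2 * m + 2 \<le> N \<longrightarrow>
             p (2 * m + 2) = (fst (p (2 * m + 1)), fst (snd (p (2 * m + 1))),
                              \<sigma> (map p [0..<2 * m + 2]))) \<longrightarrow>
        (\<forall>m. 2 * m + 2 \<le> N \<longrightarrow> div_move V E (p (2 * m + 1)) (p (2 * m + 2))) \<and>
        (\<forall>i\<le>N. fst (p i) \<noteq> fst (snd (p i))))"

lemma divider_wins_iff_strategy:
  "divider_wins V E s t k \<longleftrightarrow>
     (\<exists>D0 \<sigma>. length D0 = k \<and> set D0 \<subseteq> V - {s, t} \<and> strategy_wins V E s t D0 \<sigma>)"
  unfolding divider_wins_def strategy_wins_def ..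

lemma strategy_winsD:
  assumes "strategy_wins V E s t D0 \<sigma>" and "p 0 = (s, t, D0)"
    and "\<And>m. 2 * m + 1 \<le> N \<Longrightarrow> fac_move V E (p (2 * m)) (p (2 * m + 1))"
    and "\<And>m. 2 * m + 2 \<le> N \<Longrightarrow>
           p (2 * m + 2) = (fst (p (2 * m + 1)), fst (snd (p (2 * m + 1))), \<sigma> (map p [0..<2 * m + 2]))"
  shows "\<And>m. 2 * m + 2 \<le> N \<Longrightarrow> div_move V E (p (2 * m + 1)) (p (2 * m + 2))"
    and "\<And>i. i \<le> N \<Longrightarrow> fst (p i) \<noteq> fst (snd (p i))"
  using assms unfolding strategy_wins_def by blast+

lemma strategy_wins_no_free_common_neighbour:
  assumes win: "strategy_wins V E s t D0 \<sigma>" and sym: "\<And>u v. E u v \<Longrightarrow> E v u"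
    and c: "c \<in> V" "c \<notin> set D0" "E s c" "E c t"
  shows False
proof -
  define p where "p = (\<lambda>i::nat. if i = 0 then (s, t, D0) else (c, c, D0))"
  have fac: "fac_move V E (p (2 * m)) (p (2 * m + 1))" if "2 * m + 1 \<le> 1" for m
    using that c sym[of c t] unfolding p_def fac_move_def gstep_def by simp
  have "fst (p 1) \<noteq> fst (snd (p 1))"
    by (rule strategy_winsD(2)[where N = 1, OF win _ fac]) (simp_all add: p_def)
  then show False by (simp add: p_def)
qed

lemma strategy_wins_no_free_path3:
  assumes win: "strategy_wins V E s t D0 \<sigma>" and sym: "\<And>u v. E u v \<Longrightarrow> E v u"
    and ab: "a \<in> V" "a \<notin> set D0" "b \<in> V" "b \<notin> set D0" "E s a" "E a b" "E b t"
  shows False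
proof -
  define D' where "D' = \<sigma> [(s, t, D0), (a, b, D0)]"
  define p where "p = (\<lambda>i::nat. if i = 0 then (s, t, D0) else if i = 1 then (a, b, D0)
                                else if i = 2 then (a, b, D') else (b, b, D'))"
  have p0: "p 0 = (s, t, D0)" by (simp add: p_def)
  have strat: "p (2 * m + 2) = (fst (p (2 * m + 1)), fst (snd (p (2 * m + 1))), \<sigma> (map p [0..<2 * m + 2]))"
    if "2 * m + 2 \<le> 3" for m
  proof -
    have "m = 0" using that by simp
    moreover have "map p [0..<2] = [(s, t, D0), (a, b, D0)]" by (simp add: p_def upt_rec)
    ultimately show ?thesis by (simp add: p_def D'_def)
  qed
  have first_move: "fac_move V E (p 0) (p 1)"
    using ab sym[of b t] unfolding p_def fac_move_def gstep_def by simp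
  have "div_move V E (p (2 * 0 + 1)) (p (2 * 0 + 2))"
  proof (rule strategy_winsD(1)[where N = 2 and p = p, OF win p0])
    show "fac_move V E (p (2 * m)) (p (2 * m + 1))" if "2 * m + 1 \<le> 2" for m
    proof -
      have "m = 0" using that by arith
      then show ?thesis using first_move by simp
    qed
    show "p (2 * m + 2) = (fst (p (2 * m + 1)), fst (snd (p (2 * m + 1))), \<sigma> (map p [0..<2 * m + 2]))"
      if "2 * m + 2 \<le> 2" for m
      using that strat[of m] by simp
  qed simp
  then have "b \<notin> set D'"
    unfolding p_def div_move_def by (auto simp: in_set_conv_nth)
  then have second_move: "fac_move V E (p 2) (p 3)"
    using ab unfolding p_def fac_move_def gstep_def by simp
  have "fst (p 3) \<noteq> fst (snd (p 3))"
  proof (rule strategy_winsD(2)[where N = 3 and p = p, OF win p0 _ strat])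
    show "fac_move V E (p (2 * m)) (p (2 * m + 1))" if "2 * m + 1 \<le> 3" for m
    proof -
      have "m = 0 \<or> m = 1" using that by arith
      then show ?thesis using first_move second_move by auto
    qed
  qed simp_all
  then show False by (simp add: p_def)
qed

lemma strategy_wins_separates:
  assumes P: "P5_free V E" and sym: "\<And>u v. E u v \<Longrightarrow> E v u" and irrefl: "\<And>u. \<not> E u u"
    and st: "s \<noteq> t" "\<not> E s t" and win: "strategy_wins V E s t D0 \<sigma>"
  shows "\<not> connected_in E (V - set D0) s t"
  using P5_free_connected_in_short_path[OF P sym irrefl _ _ st]
    strategy_wins_no_free_common_neighbour[OF win sym]
    strategy_wins_no_free_path3[OF win sym]
  by blast

lemma lambda_G_le_separator:
  assumes "s \<noteq> t" "\<not> E s t" "S \<subseteq> V - {s, t}" "\<not> connected_in E (V - S) s t"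
  shows "lambda_G V E s t \<le> enat (card S)"
  using assms unfolding lambda_G_def by (auto intro: Inf_lower)

lemma lambda_G_le_divider_wins:
  assumes G: "simple_graph V E" and P: "P5_free V E"
    and st: "s \<noteq> t" "\<not> E s t" and "divider_wins V E s t k"
  shows "lambda_G V E s t \<le> enat k"
proof -
  obtain D0 \<sigma> where len: "length D0 = k" and D0: "set D0 \<subseteq> V - {s, t}"
    and win: "strategy_wins V E s t D0 \<sigma>"
    using assms(5) unfolding divider_wins_iff_strategy by blast
  have "\<And>u v. E u v \<Longrightarrow> E v u" "\<And>u. \<not> E u u" using G unfolding simple_graph_def by blast+
  then have "\<not> connected_in E (V - set D0) s t"
    using strategy_wins_separates[OF P _ _ st win] by blast
  then have "lambda_G V E s t \<le> enat (card (set D0))"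
    using st D0 by (intro lambda_G_le_separator)
  also have "\<dots> \<le> enat k" using card_length[of D0] len by simp
  finally show ?thesis .
qed

lemma static_play_invariant:
  fixes p :: "nat \<Rightarrow> 'a pos"
  assumes p0: "p 0 = (s, t, D0)" and free: "s \<in> V - set D0" "t \<in> V - set D0"
    and fac: "\<And>m. 2 * m + 1 \<le> N \<Longrightarrow> fac_move V E (p (2 * m)) (p (2 * m + 1))"
    and stay: "\<And>m. 2 * m + 2 \<le> N \<Longrightarrow> p (2 * m + 2) = (fst (p (2 * m + 1)), fst (snd (p (2 * m + 1))), D0)"
    and "i \<le> N"
  shows "snd (snd (p i)) = D0 \<and> connected_in E (V - set D0) s (fst (p i))
           \<and> connected_in E (V - set D0) t (fst (snd (p i)))"
  using \<open>i \<le> N\<close>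
proof (induction i)
  case 0
  then show ?case using p0 free unfolding connected_in_def by simp
next
  case (Suc i)
  obtain r j D where pi: "p i = (r, j, D)" by (cases "p i")
  obtain r' j' D' where pi': "p (Suc i) = (r', j', D')" by (cases "p (Suc i)")
  have IH: "D = D0" "connected_in E (V - set D0) s r" "connected_in E (V - set D0) t j"
    using Suc pi by auto
  show ?case
  proof (cases "even i")
    case True
    then obtain m where "i = 2 * m" by blast
    then have "fac_move V E (p i) (p (Suc i))" using fac Suc.prems by simp
    then have "D' = D" "gstep V E r r'" "gstep V E j j'" "r' \<notin> set D" "j' \<notin> set D"
      unfolding fac_move_def pi pi' by auto
    then show ?thesis
      using IH pi' connected_in_gstep[of E "V - set D0" s r V r'] connected_in_gstep[of E "V - set D0" t j V j']
      unfolding gstep_def by auto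
  next
    case False
    then obtain m where "i = 2 * m + 1" using oddE by blast
    then have "p (Suc i) = (r, j, D0)" using stay Suc.prems pi by simp
    then show ?thesis using IH by simp
  qed
qed

lemma static_strategy_wins:
  assumes sym: "\<And>u v. E u v \<Longrightarrow> E v u" and "s \<in> V" "t \<in> V" and D0: "set D0 \<subseteq> V - {s, t}"
    and sep: "\<not> connected_in E (V - set D0) s t"
  shows "strategy_wins V E s t D0 (\<lambda>_. D0)"
  unfolding strategy_wins_def
proof (intro allI impI)
  fix p :: "nat \<Rightarrow> 'a pos" and N :: nat
  assume p0: "p 0 = (s, t, D0)"
    and fac: "\<forall>m. 2 * m + 1 \<le> N \<longrightarrow> fac_move V E (p (2 * m)) (p (2 * m + 1))"
    and stay: "\<forall>m. 2 * m + 2 \<le> N \<longrightarrow> p (2 * m + 2) = (fst (p (2 * m + 1)), fst (snd (p (2 * m + 1))), D0)"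
  have free: "s \<in> V - set D0" "t \<in> V - set D0" using assms D0 by auto
  have inv: "snd (snd (p i)) = D0 \<and> connected_in E (V - set D0) s (fst (p i))
      \<and> connected_in E (V - set D0) t (fst (snd (p i)))" if "i \<le> N" for i
    using fac stay that by (intro static_play_invariant[where p = p and V = V, OF p0 free]) auto
  have "div_move V E (p (2 * m + 1)) (p (2 * m + 2))" if "2 * m + 2 \<le> N" for m
  proof -
    obtain r j D where pi: "p (2 * m + 1) = (r, j, D)" by (cases "p (2 * m + 1)")
    have "D = D0" "connected_in E (V - set D0) s r" "connected_in E (V - set D0) t j"
      using inv[of "2 * m + 1"] that pi by auto
    moreover have "p (2 * m + 2) = (r, j, D0)" using stay that pi by auto
    moreover have "D0 ! k \<in> V \<and> D0 ! k \<noteq> r \<and> D0 ! k \<noteq> j" if "k < length D0" for k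
      using nth_mem[OF that] D0 calculation(2,3) unfolding connected_in_def by auto
    ultimately show ?thesis unfolding pi div_move_def gstep_def by simp
  qed
  moreover have "fst (p i) \<noteq> fst (snd (p i))" if "i \<le> N" for i
  proof
    assume meet: "fst (p i) = fst (snd (p i))"
    have "connected_in E (V - set D0) s (fst (p i))" "connected_in E (V - set D0) t (fst (snd (p i)))"
      using inv[OF that] by auto
    then have "connected_in E (V - set D0) s t"
      using meet connected_in_sym[where E = E, OF sym] connected_in_trans by metis
    then show False using sep by contradiction
  qed
  ultimately show "(\<forall>m. 2 * m + 2 \<le> N \<longrightarrow> div_move V E (p (2 * m + 1)) (p (2 * m + 2)))
      \<and> (\<forall>i\<le>N. fst (p i) \<noteq> fst (snd (p i)))" by blast
qed

lemma lambda_G_attained: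
  assumes "s \<noteq> t" "\<not> E s t" "S \<subseteq> V - {s, t}" "\<not> connected_in E (V - S) s t"
  obtains S' where "S' \<subseteq> V - {s, t}" "\<not> connected_in E (V - S') s t"
    "lambda_G V E s t = enat (card S')"
proof -
  let ?cuts = "{S. S \<subseteq> V - {s, t} \<and> \<not> connected_in E (V - S) s t}"
  have "enat (card S) \<in> (\<lambda>S. enat (card S)) ` ?cuts" using assms(3,4) by blast
  then have "Inf ((\<lambda>S. enat (card S)) ` ?cuts) \<in> (\<lambda>S. enat (card S)) ` ?cuts"
    by (rule wellorder_InfI)
  then show ?thesis using that assms(1,2) unfolding lambda_G_def by auto
qed

lemma d_G_le_lambda_G:
  assumes G: "simple_graph V E" and C: "connected_graph V E"
    and "s \<in> V" "t \<in> V" and st: "s \<noteq> t" "\<not> E s t"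
  shows "d_G V E s t \<le> lambda_G V E s t"
proof (cases "\<exists>S. S \<subseteq> V - {s, t} \<and> \<not> connected_in E (V - S) s t")
  case False
  then have no_cuts: "{S. S \<subseteq> V - {s, t} \<and> \<not> connected_in E (V - S) s t} = {}" by blast
  show ?thesis unfolding lambda_G_def no_cuts using st by simp
next
  case True
  then obtain S where S: "S \<subseteq> V - {s, t}" "\<not> connected_in E (V - S) s t"
    and lambda: "lambda_G V E s t = enat (card S)"
    using lambda_G_attained[where V = V and E = E, OF st] by blast
  have "finite S" using G S(1) finite_subset unfolding simple_graph_def by blast
  then obtain D0 where D0: "set D0 = S" "distinct D0" using finite_distinct_list by blast
  have "S \<noteq> {}" using S C \<open>s \<in> V\<close> \<open>t \<in> V\<close> unfolding connected_graph_def by auto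
  then have "1 \<le> length D0" using D0 by (cases D0) auto
  moreover have "strategy_wins V E s t D0 (\<lambda>_. D0)"
    using G S D0 \<open>s \<in> V\<close> \<open>t \<in> V\<close> unfolding simple_graph_def
    by (intro static_strategy_wins) auto
  ultimately have "enat (length D0) \<in> enat ` {k. 1 \<le> k \<and> divider_wins V E s t k}"
    using D0 S unfolding divider_wins_iff_strategy by blast
  then have "d_G V E s t \<le> enat (length D0)" using st unfolding d_G_def by (auto intro: Inf_lower)
  then show ?thesis using lambda D0 distinct_card by fastforce
qed

theorem mainTheorem7:
  fixes V :: "'a set" and E :: "'a \<Rightarrow> 'a \<Rightarrow> bool"
  assumes "simple_graph V E" and "connected_graph V E" and "P5_free V E"
  shows "\<forall>s\<in>V. \<forall>t\<in>V. d_G V E s t = lambda_G V E s t"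
proof (intro ballI)
  fix s t assume "s \<in> V" "t \<in> V"
  show "d_G V E s t = lambda_G V E s t"
  proof (cases "s = t \<or> E s t")
    case True
    then show ?thesis unfolding d_G_def lambda_G_def by simp
  next
    case False
    then have st: "s \<noteq> t" "\<not> E s t" by auto
    have "lambda_G V E s t \<le> d_G V E s t"
      using lambda_G_le_divider_wins[OF assms(1,3) st] st unfolding d_G_def
      by (auto intro!: Inf_greatest)
    moreover have "d_G V E s t \<le> lambda_G V E s t"
      using d_G_le_lambda_G[OF assms(1,2) \<open>s \<in> V\<close> \<open>t \<in> V\<close> st] .
    ultimately show ?thesis by simp
  qed
qed

end
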